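(* There are a polynomial $p$ and a sequence $\{D_n\}_{n\ge1}$ of definite causal theories such that, for every $n$, $D_n$ is on signature $\{x_1,\dots,x_n\}$, the set of models of $D_n$ is exactly PARITY$_n$, and $|D_n|\le p(n)$.
   Context: A literal is a variable $x$ or its negation $\neg x$. A definite causal theory on signature $\{x_1,\dots,x_n\}$ is a finite set of causal rules $H\Leftarrow G$, where $H$ is a literal over $x_1,\dots,x_n$ or $\bot$, and $G$ is a propositional formula (connectives $\wedge,\vee,\neg$) over $x_1,\dots,x_n$. For $I\subseteq\{x_1,\dots,x_n\}$ (viewed as the interpretation making exactly the variables in $I$ true), the reduct $D^I$ is the set of heads $H$ of all rules $H\Leftarrow G$ of $D$ with $I\models G$. $I$ is a model of $D$ if $I$ is the unique interpretation of $\{x_1,\dots,x_n\}$ satisfying every element of $D^I$. The size $|D|$ of a (not necessarily simple) definite theory is the number of connectives occurring in it. Strings $w\in\{0,1\}^n$ are identified with $\{x_i:w_i=1\}$; PARITY$_n$ is the set of strings in $\{0,1\}^n$ with an odd number of 1's. *)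

theory Defs
  imports Main "HOL-Computational_Algebra.Polynomial"
begin

datatype fm = Var nat | Neg fm | Conj fm fm | Disj fm fm

datatype head = PosLit nat | NegLit nat | Bot

type_synonym rule = "head \<times> fm"

text \<open>Interpretations are sets of (indices of) true variables.\<close>
fun sat :: "nat set \<Rightarrow> fm \<Rightarrow> bool" where
  "sat I (Var i) = (i \<in> I)"
| "sat I (Neg f) = (\<not> sat I f)"
| "sat I (Conj f g) = (sat I f \<and> sat I g)"
| "sat I (Disj f g) = (sat I f \<or> sat I g)"

fun sat_head :: "nat set \<Rightarrow> head \<Rightarrow> bool" where
  "sat_head I (PosLit i) = (i \<in> I)"
| "sat_head I (NegLit i) = (i \<notin> I)"
| "sat_head I Bot = False"

fun fm_vars :: "fm \<Rightarrow> nat set" where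
  "fm_vars (Var i) = {i}"
| "fm_vars (Neg f) = fm_vars f"
| "fm_vars (Conj f g) = fm_vars f \<union> fm_vars g"
| "fm_vars (Disj f g) = fm_vars f \<union> fm_vars g"

fun head_vars :: "head \<Rightarrow> nat set" where
  "head_vars (PosLit i) = {i}"
| "head_vars (NegLit i) = {i}"
| "head_vars Bot = {}"

definition causal_theory_on :: "nat \<Rightarrow> rule set \<Rightarrow> bool" where
  "causal_theory_on n D \<longleftrightarrow> finite D \<and>
     (\<forall>(H, G) \<in> D. head_vars H \<subseteq> {1..n} \<and> fm_vars G \<subseteq> {1..n})"

definition reduct :: "rule set \<Rightarrow> nat set \<Rightarrow> head set" where
  "reduct D I = {H. \<exists>G. (H, G) \<in> D \<and> sat I G}"

definition is_model :: "nat \<Rightarrow> rule set \<Rightarrow> nat set \<Rightarrow> bool" where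
  "is_model n D I \<longleftrightarrow> I \<subseteq> {1..n} \<and>
     (\<forall>J. J \<subseteq> {1..n} \<longrightarrow> ((\<forall>H \<in> reduct D I. sat_head J H) \<longleftrightarrow> J = I))"

definition models :: "nat \<Rightarrow> rule set \<Rightarrow> nat set set" where
  "models n D = {I. is_model n D I}"

text \<open>Size: number of connectives. A negative literal head counts one negation.\<close>
fun fm_size :: "fm \<Rightarrow> nat" where
  "fm_size (Var i) = 0"
| "fm_size (Neg f) = Suc (fm_size f)"
| "fm_size (Conj f g) = Suc (fm_size f + fm_size g)"
| "fm_size (Disj f g) = Suc (fm_size f + fm_size g)"

fun head_size :: "head \<Rightarrow> nat" where
  "head_size (PosLit i) = 0"
| "head_size (NegLit i) = 1"
| "head_size Bot = 0"

definition theory_size :: "rule set \<Rightarrow> nat" where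
  "theory_size D = (\<Sum>(H, G) \<in> D. head_size H + fm_size G)"

text \<open>PARITY_n, with strings identified with subsets of {x_1,...,x_n}.\<close>
definition parity :: "nat \<Rightarrow> nat set set" where
  "parity n = {I. I \<subseteq> {1..n} \<and> odd (card I)}"

end

theory Submission
  imports Defs
begin

text \<open>The rules \<open>x\<^sub>i \<Leftarrow> x\<^sub>i\<close> and \<open>\<not>x\<^sub>i \<Leftarrow> \<not>x\<^sub>i\<close> make every atom exogenous, so that
  every interpretation is a model, and a single rule \<open>\<bottom> \<Leftarrow> \<not>\<phi>\<close> then cuts the models down
  to those satisfying \<open>\<phi>\<close>. It remains to express parity by a formula of polynomial size:
  splitting the variables into two halves, the parity of the whole is \<open>b\<close> iff the left half
  has parity \<open>b\<close> and the right half is even, or the left half has parity \<open>\<not>b\<close> and the right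
  half is odd. This doubles the number of subformulas while halving their length, giving
  size \<open>O(n\<^sup>2)\<close>.\<close>

function parity_fm :: "nat \<Rightarrow> nat \<Rightarrow> bool \<Rightarrow> fm" where
  "parity_fm lo len b =
     (if len \<le> 1 then (if b then Var lo else Neg (Var lo))
      else let h = len div 2 in
        Disj (Conj (parity_fm lo h b) (parity_fm (lo + h) (len - h) False))
             (Conj (parity_fm lo h (\<not> b)) (parity_fm (lo + h) (len - h) True)))"
  by pat_completeness auto
termination by (relation "measure (\<lambda>(lo, len, b). len)") auto

declare parity_fm.simps [simp del]

lemma parity_fm_single: "len \<le> 1 \<Longrightarrow> parity_fm lo len b = (if b then Var lo else Neg (Var lo))"
  by (simp add: parity_fm.simps)

lemma parity_fm_split:
  assumes "h = len div 2" and "2 \<le> len"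
  shows "parity_fm lo len b =
     Disj (Conj (parity_fm lo h b) (parity_fm (lo + h) (len - h) False))
          (Conj (parity_fm lo h (\<not> b)) (parity_fm (lo + h) (len - h) True))"
  using assms by (subst parity_fm.simps) (simp add: Let_def)

lemma sat_parity_fm:
  assumes "1 \<le> len"
  shows "sat I (parity_fm lo len b) \<longleftrightarrow> odd (card (I \<inter> {lo..<lo + len})) = b"
  using assms
proof (induction len arbitrary: lo b rule: less_induct)
  case (less len)
  show ?case
  proof (cases "len \<le> 1")
    case True
    then have "I \<inter> {lo..<lo + len} = (if lo \<in> I then {lo} else {})"
      using less.prems by auto
    then show ?thesis using True by (simp add: parity_fm_single)
  next
    case False
    define h where "h = len div 2"
    have h: "1 \<le> h" "h < len" "1 \<le> len - h" "len - h < len"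
      using False by (auto simp: h_def)
    have "I \<inter> {lo..<lo + len} = I \<inter> {lo..<lo + h} \<union> I \<inter> {lo + h..<lo + h + (len - h)}"
      using h by auto
    then have "card (I \<inter> {lo..<lo + len})
        = card (I \<inter> {lo..<lo + h}) + card (I \<inter> {lo + h..<lo + h + (len - h)})"
      by (simp add: card_Un_disjoint disjoint_iff)
    then show ?thesis
      using less.IH[OF h(2,1)] less.IH[OF h(4,3)] False
      by (auto simp: parity_fm_split[OF h_def])
  qed
qed

lemma fm_vars_parity_fm: "1 \<le> len \<Longrightarrow> fm_vars (parity_fm lo len b) \<subseteq> {lo..<lo + len}"
proof (induction len arbitrary: lo b rule: less_induct)
  case (less len)
  show ?case
  proof (cases "len \<le> 1")
    case True
    then show ?thesis using less.prems by (simp add: parity_fm_single)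
  next
    case False
    define h where "h = len div 2"
    have h: "1 \<le> h" "h < len" "1 \<le> len - h" "len - h < len"
      using False by (auto simp: h_def)
    show ?thesis
      using less.IH[OF h(2,1), of lo] less.IH[OF h(4,3), of "lo + h"] False h
      by (fastforce simp: parity_fm_split[OF h_def])
  qed
qed

lemma fm_size_parity_fm: "1 \<le> len \<Longrightarrow> fm_size (parity_fm lo len b) + 3 \<le> 4 * len\<^sup>2"
proof (induction len arbitrary: lo b rule: less_induct)
  case (less len)
  show ?case
  proof (cases "len \<le> 1")
    case True
    then have "len = 1" using less.prems by simp
    then show ?thesis by (simp add: parity_fm_single)
  next
    case False
    define h where "h = len div 2"
    have h: "1 \<le> h" "h < len" "1 \<le> len - h" "len - h < len"
      using False by (auto simp: h_def)
    have "len = 2 * h \<or> len = 2 * h + 1" unfolding h_def by presburger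
    then have "8 * h\<^sup>2 + 8 * (len - h)\<^sup>2 \<le> 4 * len\<^sup>2 + 6"
      by (auto simp: power2_eq_square algebra_simps)
    moreover have "fm_size (parity_fm lo len b) = 3
        + fm_size (parity_fm lo h b) + fm_size (parity_fm (lo + h) (len - h) False)
        + fm_size (parity_fm lo h (\<not> b)) + fm_size (parity_fm (lo + h) (len - h) True)"
      using False by (simp add: parity_fm_split[OF h_def])
    ultimately show ?thesis
      using less.IH[OF h(2,1), of lo b] less.IH[OF h(2,1), of lo "\<not> b"]
        less.IH[OF h(4,3), of "lo + h" False] less.IH[OF h(4,3), of "lo + h" True]
      by linarith
  qed
qed

definition constraint_theory :: "nat \<Rightarrow> fm \<Rightarrow> rule set" where
  "constraint_theory n \<phi> =
     (\<lambda>i. (PosLit i, Var i)) ` {1..n} \<union> (\<lambda>i. (NegLit i, Neg (Var i))) ` {1..n}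
     \<union> {(Bot, Neg \<phi>)}"

lemma causal_theory_on_constraint_theory:
  "fm_vars \<phi> \<subseteq> {1..n} \<Longrightarrow> causal_theory_on n (constraint_theory n \<phi>)"
  unfolding causal_theory_on_def constraint_theory_def by auto

lemma theory_size_constraint_theory:
  "theory_size (constraint_theory n \<phi>) = 2 * n + 1 + fm_size \<phi>"
proof -
  have "inj_on (\<lambda>i. (PosLit i, Var i)) {1..n}" "inj_on (\<lambda>i. (NegLit i, Neg (Var i))) {1..n}"
    by (auto simp: inj_on_def)
  then show ?thesis
    unfolding theory_size_def constraint_theory_def
    by (subst sum.union_disjoint; auto)+ (simp add: sum.reindex)
qed

lemma reduct_constraint_theory:
  "reduct (constraint_theory n \<phi>) I =
     PosLit ` (I \<inter> {1..n}) \<union> NegLit ` ({1..n} - I) \<union> (if sat I \<phi> then {} else {Bot})"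
  unfolding reduct_def constraint_theory_def by auto

lemma models_constraint_theory:
  "models n (constraint_theory n \<phi>) = {I. I \<subseteq> {1..n} \<and> sat I \<phi>}"
proof (rule set_eqI)
  fix I
  have literals: "(\<forall>H \<in> PosLit ` (I \<inter> {1..n}) \<union> NegLit ` ({1..n} - I). sat_head J H) \<longleftrightarrow> J = I"
    if "I \<subseteq> {1..n}" "J \<subseteq> {1..n}" for J
  proof
    assume heads: "\<forall>H \<in> PosLit ` (I \<inter> {1..n}) \<union> NegLit ` ({1..n} - I). sat_head J H"
    have "i \<in> J \<longleftrightarrow> i \<in> I" if "i \<in> {1..n}" for i
      using heads[rule_format, of "if i \<in> I then PosLit i else NegLit i"] that
      by (cases "i \<in> I") auto
    then show "J = I" using that by blast
  qed auto
  show "I \<in> models n (constraint_theory n \<phi>) \<longleftrightarrow> I \<in> {I. I \<subseteq> {1..n} \<and> sat I \<phi>}"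
  proof (cases "I \<subseteq> {1..n} \<and> sat I \<phi>")
    case True
    then show ?thesis
      using literals by (simp add: models_def is_model_def reduct_constraint_theory)
  next
    case False
    then have "\<not> is_model n (constraint_theory n \<phi>) I"
      by (auto simp: is_model_def reduct_constraint_theory)
    then show ?thesis using False by (simp add: models_def)
  qed
qed

theorem mainTheorem19:
  shows "\<exists>(p :: real poly) (D :: nat \<Rightarrow> rule set). \<forall>n \<ge> 1.
           causal_theory_on n (D n) \<and> models n (D n) = parity n \<and>
           real (theory_size (D n)) \<le> poly p (real n)"
proof (intro exI allI impI conjI)
  fix n :: nat
  assume n: "n \<ge> 1"
  let ?D = "constraint_theory n (parity_fm 1 n True)"
  show "causal_theory_on n ?D"
    using fm_vars_parity_fm[OF n, of 1 True] by (intro causal_theory_on_constraint_theory) auto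
  have "sat I (parity_fm 1 n True) \<longleftrightarrow> odd (card I)" if "I \<subseteq> {1..n}" for I
  proof -
    have "I \<inter> {1..<1 + n} = I" using that by auto
    then show ?thesis by (simp add: sat_parity_fm[OF n])
  qed
  then show "models n ?D = parity n"
    unfolding models_constraint_theory parity_def by auto
  have "theory_size ?D \<le> 2 + 2 * n + 4 * n\<^sup>2"
    using theory_size_constraint_theory fm_size_parity_fm[OF n, of 1 True] by simp
  then have "real (theory_size ?D) \<le> real (2 + 2 * n + 4 * n\<^sup>2)"
    by linarith
  also have "\<dots> = poly [:2, 2, 4:] (real n)"
    by (simp add: algebra_simps power2_eq_square)
  finally show "real (theory_size ?D) \<le> poly [:2, 2, 4:] (real n)" .
qed

end
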